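(* Let $K\in\mathcal{K}$ and let $L\in\mathbb{R}^{q\times n}$ be such that $A_K+DL$ is Hurwitz. Let $P_K^L$ be the solution of $$(A_K+DL)^\top P_K^L+P_K^L(A_K+DL)+Q_K-\gamma^2L^\top L=0.$$ Let $L'=\gamma^{-2}D^\top P_K^L$, $\Psi_K^L=\gamma^{2}(L'-L)^\top(L'-L)$, $L^\star_K=\gamma^{-2}D^\top P_K$, and $c(K)=\mathrm{Tr}\left(\int_0^\infty e^{(A_K+DL^\star_K)t}e^{(A_K+DL^\star_K)^\top t}\,dt\right)$. Then $\mathrm{Tr}(P_K-P_K^L)\le\|\Psi_K^L\|\,c(K)$.
   Context: Let $A\in\mathbb{R}^{n\times n}$, $B\in\mathbb{R}^{n\times m}$, $C\in\mathbb{R}^{p\times n}$, $D\in\mathbb{R}^{n\times q}$, $E\in\mathbb{R}^{p\times m}$, $\gamma>0$, with $Q:=C^\top C\succ 0$, $E^\top C=0$, $R:=E^\top E\succ 0$. For $K\in\mathbb{R}^{m\times n}$ set $A_K=A-BK$, $Q_K=Q+K^\top RK$, $T_{zw}(K)(s)=(C-EK)(sI-A+BK)^{-1}D$, and $\mathcal{K}=\{K:\ A_K\text{ Hurwitz},\ \|T_{zw}(K)\|_{\mathcal{H}_\infty}<\gamma\}$, where $\|G\|_{\mathcal{H}_\infty}=\sup_{\omega\in\mathbb{R}}\bar\sigma(G(j\omega))$. For $K\in\mathcal{K}$, $P_K$ denotes the unique symmetric positive definite solution of $A_K^\top P+PA_K+Q_K+\gamma^{-2}PDD^\top P=0$ for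 which $A_K+\gamma^{-2}DD^\top P_K$ is Hurwitz. $\|\cdot\|$ is the spectral norm, $\mathrm{Tr}$ the trace. *)

theory Defs
  imports "HOL-Analysis.Analysis"
begin

text \<open>Matrices are Cartesian: an r x c real matrix is real^'c^'r.\<close>

definition mpow :: "real^'n^'n \<Rightarrow> nat \<Rightarrow> real^'n^'n" where
  "mpow M k = ((\<lambda>X. X ** M) ^^ k) (mat 1)"

definition mexp :: "real^'n^'n \<Rightarrow> real^'n^'n" where
  "mexp M = (\<Sum>k. (1 / fact k) *\<^sub>R mpow M k)"

definition cmat :: "real^'c^'r \<Rightarrow> complex^'c^'r" where
  "cmat M = map_matrix complex_of_real M"

definition hurwitz :: "real^'n^'n \<Rightarrow> bool" where
  "hurwitz M \<longleftrightarrow> (\<forall>mu::complex. (\<exists>v::complex^'n. v \<noteq> 0 \<and> cmat M *v v = mu *s v) \<longrightarrow> Re mu < 0)"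

text \<open>Spectral norm (largest singular value) = operator norm w.r.t. Euclidean norms.\<close>
definition spec_norm :: "real^'c^'r \<Rightarrow> real" where
  "spec_norm M = onorm (\<lambda>x. M *v x)"

definition cspec_norm :: "complex^'c^'r \<Rightarrow> real" where
  "cspec_norm M = onorm (\<lambda>x. M *v x)"

definition pos_def :: "real^'n^'n \<Rightarrow> bool" where
  "pos_def M \<longleftrightarrow> transpose M = M \<and> (\<forall>x. x \<noteq> 0 \<longrightarrow> x \<bullet> (M *v x) > 0)"

definition Tzw :: "real^'n^'n \<Rightarrow> real^'m^'n \<Rightarrow> real^'n^'p \<Rightarrow> real^'q^'n \<Rightarrow> real^'m^'p
                  \<Rightarrow> real^'n^'m \<Rightarrow> complex \<Rightarrow> complex^'q^'p" where
  "Tzw A B C D E K s = cmat (C - E ** K) ** matrix_inv (mat s - cmat (A - B ** K)) ** cmat D"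

definition Hinf_norm :: "(complex \<Rightarrow> complex^'q^'p) \<Rightarrow> real" where
  "Hinf_norm G = (SUP \<omega>\<in>(UNIV::real set). cspec_norm (G (\<i> * complex_of_real \<omega>)))"

definition Kset :: "real^'n^'n \<Rightarrow> real^'m^'n \<Rightarrow> real^'n^'p \<Rightarrow> real^'q^'n \<Rightarrow> real^'m^'p
                  \<Rightarrow> real \<Rightarrow> (real^'n^'m) set" where
  "Kset A B C D E \<gamma> = {K. hurwitz (A - B ** K) \<and>
      bdd_above (range (\<lambda>\<omega>::real. cspec_norm (Tzw A B C D E K (\<i> * complex_of_real \<omega>)))) \<and>
      Hinf_norm (Tzw A B C D E K) < \<gamma>}"

end

(* With Delta = P_K - P_K^L and A_cl = A_K + D L*_K (Hurwitz by hypothesis), subtracting the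
   Lyapunov equation of P_K^L from the Riccati equation of P_K gives the identity

     A_cl^T Delta + Delta A_cl + Psi = gamma^-2 Delta D D^T Delta,

   so -(A_cl^T Delta + Delta A_cl) <= Psi <= |Psi| I in the Loewner order. Integrating
   d/dt (y^T Delta y) along the trajectories y(t) = e^(t A_cl) x, which decay exponentially, gives
   x^T Delta x <= |Psi| int_0^oo |e^(t A_cl) x|^2 dt; summing over a basis yields the trace bound.

   Exponential decay for a Hurwitz matrix A comes from a quadratic Lyapunov function: the Cayley
   transform (I - A)^-1 (I + A) has its spectrum in the open unit disc, so by the spectral radius
   bounds of Jordan_Normal_Form some power of it is a contraction, and a finite sum of its powers
   yields the Lyapunov function. *)

theory Submission
  imports Defs "Jordan_Normal_Form.Spectral_Radius"
begin

hide_const (open) Matrix.mat Matrix.vec Matrix.row Matrix.col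
no_notation Matrix.scalar_prod (infix "\<bullet>" 70)
no_notation Matrix.vec_index (infixl "$" 100)

section \<open>Matrix algebra\<close>

lemma matrix_add_rdistrib:
  fixes A B :: "'a::semiring_1^'n^'m" and C :: "'a^'p^'n"
  shows "(A + B) ** C = A ** C + B ** C"
  by (simp add: matrix_matrix_mult_def Finite_Cartesian_Product.vec_eq_iff sum.distrib distrib_right)

lemma matrix_diff_ldistrib: "(A::'a::ring_1^'n^'m) ** (B - C) = A ** B - A ** C"
  by (simp add: matrix_matrix_mult_def Finite_Cartesian_Product.vec_eq_iff sum_subtractf right_diff_distrib)

lemma matrix_diff_rdistrib: "(A - B) ** (C::'a::ring_1^'p^'n) = A ** C - B ** (C::'a^'p^'n)"
  by (simp add: matrix_matrix_mult_def Finite_Cartesian_Product.vec_eq_iff sum_subtractf left_diff_distrib)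

lemma transpose_add: "transpose (A + B) = transpose A + transpose (B::'a::semiring_1^'n^'m)"
  by (simp add: transpose_def Finite_Cartesian_Product.vec_eq_iff)

lemma transpose_diff: "transpose (A - B) = transpose A - transpose (B::'a::ring_1^'n^'m)"
  by (simp add: transpose_def Finite_Cartesian_Product.vec_eq_iff)

lemma transpose_zero [simp]: "transpose (0::'a::zero^'n^'m) = 0"
  by (simp add: transpose_def Finite_Cartesian_Product.vec_eq_iff)

lemma inner_transpose_mult_vec: "x \<bullet> (transpose M *v y) = (M *v x) \<bullet> (y::real^'m)"
  by (metis dot_lmul_matrix inner_commute transpose_matrix_vector)

lemma inner_transpose_mult_self: "x \<bullet> ((transpose M ** M) *v y) = (M *v x) \<bullet> (M *v (y::real^'n))"
  by (metis inner_transpose_mult_vec matrix_vector_mul_assoc)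

lemma sum_matrix_vector_mult: "(\<Sum>k\<in>S. f k) *v (y::real^'n) = (\<Sum>k\<in>S. f k *v y)"
  by (induction S rule: infinite_finite_induct) (simp_all add: matrix_vector_mult_add_rdistrib)

lemma matrix_vector_mult_axis: "((M::real^'n^'m) *v axis k 1) $ i = M $ i $ k"
  by (simp add: matrix_vector_mult_basis column_def)

lemma inner_lyapunov_operator:
  "(A *v x) \<bullet> (Z *v y) + x \<bullet> (Z *v (A *v y)) = x \<bullet> ((transpose A ** Z + Z ** A) *v (y::real^'n))"
proof -
  have "x \<bullet> ((transpose A ** Z) *v y) = (A *v x) \<bullet> (Z *v y)"
    by (metis inner_transpose_mult_vec matrix_vector_mul_assoc)
  then show ?thesis by (simp add: matrix_vector_mult_add_rdistrib inner_add_right matrix_vector_mul_assoc)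
qed

lemma bounded_bilinear_matrix_mult: "bounded_bilinear ((**) :: real^'n^'m \<Rightarrow> real^'p^'n \<Rightarrow> real^'p^'m)"
  unfolding bilinear_conv_bounded_bilinear[symmetric] bilinear_def
  by (auto intro!: linearI simp: matrix_add_ldistrib matrix_add_rdistrib matrix_scalar_ac
      scalar_matrix_assoc[symmetric])

lemma bounded_linear_trace: "bounded_linear (trace :: real^'n^'n \<Rightarrow> real)"
  unfolding linear_conv_bounded_linear[symmetric]
  by (rule linearI) (simp_all add: trace_def sum.distrib sum_distrib_left)

lemma trace_eq_sum_inner_axis: "trace (M::real^'n^'n) = (\<Sum>k\<in>UNIV. axis k 1 \<bullet> (M *v axis k 1))"
  by (simp add: trace_def inner_axis' matrix_vector_mult_axis)

lemma trace_mult_transpose: "trace (M ** transpose M) = (\<Sum>k\<in>UNIV. norm ((M::real^'k^'n) *v axis k 1) ^ 2)"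
proof -
  have "trace (M ** transpose M) = (\<Sum>i\<in>UNIV. \<Sum>k\<in>UNIV. M $ i $ k * M $ i $ k)"
    by (simp add: trace_def matrix_matrix_mult_def transpose_def)
  also have "\<dots> = (\<Sum>k\<in>UNIV. \<Sum>i\<in>UNIV. M $ i $ k * M $ i $ k)" by (rule sum.swap)
  finally show ?thesis by (simp add: power2_norm_eq_inner inner_vec_def matrix_vector_mult_axis)
qed

lemma onorm_matrix_nonneg: "0 \<le> onorm (\<lambda>x. (M::real^'n^'m) *v x)"
  by (rule onorm_pos_le[OF matrix_vector_mul_bounded_linear])

lemma inner_le_onorm: "x \<bullet> ((X::real^'n^'n) *v x) \<le> onorm (\<lambda>v. X *v v) * (x \<bullet> x)"
proof -
  have "x \<bullet> (X *v x) \<le> norm x * norm (X *v x)" by (rule norm_cauchy_schwarz)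
  also have "\<dots> \<le> norm x * (onorm (\<lambda>v. X *v v) * norm x)"
    using onorm[OF matrix_vector_mul_bounded_linear, of X x] by (intro mult_left_mono) auto
  also have "\<dots> = onorm (\<lambda>v. X *v v) * (x \<bullet> x)"
    by (simp add: power2_norm_eq_inner[symmetric] power2_eq_square)
  finally show ?thesis .
qed

lemma norm_matrix_le_sum_abs: "norm (M::real^'n^'m) \<le> (\<Sum>i\<in>UNIV. \<Sum>j\<in>UNIV. \<bar>M $ i $ j\<bar>)"
proof -
  have "norm M \<le> (\<Sum>i\<in>UNIV. norm (M $ i))"
    unfolding norm_vec_def by (simp add: L2_set_le_sum)
  also have "\<dots> \<le> (\<Sum>i\<in>UNIV. \<Sum>j\<in>UNIV. \<bar>M $ i $ j\<bar>)"
    by (intro sum_mono) (simp add: norm_le_l1_cart)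
  finally show ?thesis .
qed

lemma norm_matrix_le_onorm: "norm (M::real^'n^'m) \<le> CARD('m) * CARD('n) * onorm (\<lambda>x. M *v x)"
proof -
  have "norm M \<le> (\<Sum>i\<in>(UNIV::'m set). \<Sum>j\<in>(UNIV::'n set). onorm (\<lambda>x. M *v x))"
    by (rule order_trans[OF norm_matrix_le_sum_abs]) (intro sum_mono matrix_component_le_onorm)
  then show ?thesis by simp
qed

lemma onorm_le_norm_matrix: "onorm (\<lambda>x. (M::real^'n^'m) *v x) \<le> CARD('m) * CARD('n) * norm M"
proof -
  have "onorm (\<lambda>x. M *v x) \<le> (\<Sum>i\<in>(UNIV::'m set). \<Sum>j\<in>(UNIV::'n set). norm M)"
    by (rule order_trans[OF onorm_le_matrix_component_sum])
      (intro sum_mono order_trans[OF component_le_norm_cart Finite_Cartesian_Product.norm_nth_le])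
  then show ?thesis by simp
qed

lemma norm_mult_transpose_le:
  "norm (M ** transpose M) \<le> CARD('n) * CARD('n) * trace (M ** transpose (M::real^'k^'n))"
proof -
  have entry: "\<bar>(M ** transpose M) $ i $ j\<bar> \<le> trace (M ** transpose M)" for i j
  proof -
    have col: "\<bar>M $ i $ k\<bar> \<le> norm (M *v axis k 1)" for i k
      using component_le_norm_cart[of "M *v axis k 1" i] by (simp add: matrix_vector_mult_axis)
    have "\<bar>(M ** transpose M) $ i $ j\<bar> = \<bar>\<Sum>k\<in>UNIV. M $ i $ k * M $ j $ k\<bar>"
      by (simp add: matrix_matrix_mult_def transpose_def)
    also have "\<dots> \<le> (\<Sum>k\<in>UNIV. \<bar>M $ i $ k\<bar> * \<bar>M $ j $ k\<bar>)"
      by (rule order_trans[OF sum_abs]) (simp add: abs_mult)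
    also have "\<dots> \<le> (\<Sum>k\<in>UNIV. norm (M *v axis k 1) ^ 2)"
      unfolding power2_eq_square by (intro sum_mono mult_mono col) auto
    finally show ?thesis by (simp only: trace_mult_transpose)
  qed
  have "norm (M ** transpose M) \<le> (\<Sum>i\<in>(UNIV::'n set). \<Sum>j\<in>(UNIV::'n set). trace (M ** transpose M))"
    by (rule order_trans[OF norm_matrix_le_sum_abs]) (intro sum_mono entry)
  then show ?thesis by simp
qed

section \<open>The matrix exponential\<close>

text \<open>Square matrices under the operator norm form a real Banach algebra; the copy \<open>'n sqmat\<close> of
  their type gives access to the library's \<^const>\<open>exp\<close>.\<close>

typedef ('n::finite) sqmat = "UNIV :: (real^'n^'n) set" by simp

setup_lifting type_definition_sqmat

instantiation sqmat :: (finite) real_algebra_1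
begin
lift_definition zero_sqmat :: "'a sqmat" is "0" .
lift_definition one_sqmat :: "'a sqmat" is "mat 1" .
lift_definition plus_sqmat :: "'a sqmat \<Rightarrow> 'a sqmat \<Rightarrow> 'a sqmat" is "(+)" .
lift_definition minus_sqmat :: "'a sqmat \<Rightarrow> 'a sqmat \<Rightarrow> 'a sqmat" is "(-)" .
lift_definition uminus_sqmat :: "'a sqmat \<Rightarrow> 'a sqmat" is "uminus" .
lift_definition times_sqmat :: "'a sqmat \<Rightarrow> 'a sqmat \<Rightarrow> 'a sqmat" is "(**)" .
lift_definition scaleR_sqmat :: "real \<Rightarrow> 'a sqmat \<Rightarrow> 'a sqmat" is "scaleR" .
instance
proof
  fix a b c :: "'a sqmat" and r s :: real
  show "a + b + c = a + (b + c)" by transfer (simp add: add.assoc)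
  show "a + b = b + a" by transfer (simp add: add.commute)
  show "0 + a = a" by transfer simp
  show "- a + a = 0" by transfer simp
  show "a - b = a + - b" by transfer simp
  show "r *\<^sub>R (a + b) = r *\<^sub>R a + r *\<^sub>R b" by transfer (simp add: scaleR_add_right)
  show "(r + s) *\<^sub>R a = r *\<^sub>R a + s *\<^sub>R a" by transfer (simp add: scaleR_add_left)
  show "r *\<^sub>R s *\<^sub>R a = (r * s) *\<^sub>R a" by transfer simp
  show "1 *\<^sub>R a = a" by transfer simp
  show "a * b * c = a * (b * c)" by transfer (simp add: matrix_mul_assoc)
  show "1 * a = a" by transfer simp
  show "a * 1 = a" by transfer simp
  show "(a + b) * c = a * c + b * c" by transfer (simp add: matrix_add_rdistrib)
  show "a * (b + c) = a * b + a * c" by transfer (simp add: matrix_add_ldistrib)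
  show "(0::'a sqmat) \<noteq> 1"
    by transfer (simp add: Finite_Cartesian_Product.vec_eq_iff Finite_Cartesian_Product.mat_def)
  show "r *\<^sub>R a * b = r *\<^sub>R (a * b)" by transfer (rule scalar_matrix_assoc[symmetric])
  show "a * r *\<^sub>R b = r *\<^sub>R (a * b)" by transfer (simp add: matrix_scalar_ac scalar_matrix_assoc)
qed
end

instantiation sqmat :: (finite) real_normed_algebra_1
begin
lift_definition norm_sqmat :: "'a sqmat \<Rightarrow> real" is "\<lambda>M. onorm (\<lambda>x. M *v x)" .

definition sgn_sqmat :: "'a sqmat \<Rightarrow> 'a sqmat" where "sgn_sqmat x = x /\<^sub>R norm x"

definition dist_sqmat :: "'a sqmat \<Rightarrow> 'a sqmat \<Rightarrow> real" where "dist_sqmat x y = norm (x - y)"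

definition uniformity_sqmat :: "('a sqmat \<times> 'a sqmat) filter" where
  "uniformity_sqmat = (INF e\<in>{0 <..}. principal {(x, y). dist x y < e})"

definition open_sqmat :: "'a sqmat set \<Rightarrow> bool" where
  "open_sqmat U = (\<forall>x\<in>U. \<forall>\<^sub>F (x', y) in uniformity. x' = x \<longrightarrow> y \<in> U)"
instance
proof
  fix a b :: "'a sqmat" and r :: real and U :: "'a sqmat set"
  show "dist a b = norm (a - b)" by (simp add: dist_sqmat_def)
  show "sgn a = a /\<^sub>R norm a" by (simp add: sgn_sqmat_def)
  show "(uniformity :: ('a sqmat \<times> 'a sqmat) filter) = (INF e\<in>{0 <..}. principal {(x, y). dist x y < e})"
    by (simp add: uniformity_sqmat_def)
  show "open U = (\<forall>x\<in>U. \<forall>\<^sub>F (x', y) in uniformity. x' = x \<longrightarrow> y \<in> U)"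
    by (simp add: open_sqmat_def)
  show "norm a = 0 \<longleftrightarrow> a = 0"
    by transfer (simp add: onorm_eq_0[OF matrix_vector_mul_bounded_linear] matrix_eq[where B=0])
  have bl: "bounded_linear (\<lambda>x. M *v x)" for M :: "real^'a^'a"
    by (rule matrix_vector_mul_bounded_linear)
  show "norm (a + b) \<le> norm a + norm b"
  proof transfer
    fix a b :: "real^'a^'a"
    have "(\<lambda>x. (a + b) *v x) = (\<lambda>x. a *v x + b *v x)" by (simp add: matrix_vector_mult_add_rdistrib)
    then show "onorm (\<lambda>x. (a + b) *v x) \<le> onorm (\<lambda>x. a *v x) + onorm (\<lambda>x. b *v x)"
      by (simp only: onorm_triangle[OF bl bl])
  qed
  show "norm (r *\<^sub>R a) = \<bar>r\<bar> * norm a"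
  proof transfer
    fix r and a :: "real^'a^'a"
    have "(\<lambda>x. (r *\<^sub>R a) *v x) = (\<lambda>x. r *\<^sub>R (a *v x))" by (simp add: scaleR_matrix_vector_assoc)
    then show "onorm (\<lambda>x. (r *\<^sub>R a) *v x) = \<bar>r\<bar> * onorm (\<lambda>x. a *v x)"
      by (simp only: onorm_scaleR[OF bl])
  qed
  show "norm (a * b) \<le> norm a * norm b"
  proof transfer
    fix a b :: "real^'a^'a"
    have "(\<lambda>x. (a ** b) *v x) = (\<lambda>x. a *v x) \<circ> (\<lambda>x. b *v x)" by (simp add: o_def matrix_vector_mul_assoc)
    then show "onorm (\<lambda>x. (a ** b) *v x) \<le> onorm (\<lambda>x. a *v x) * onorm (\<lambda>x. b *v x)"
      by (simp only: onorm_compose[OF bl bl])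
  qed
  show "norm (1::'a sqmat) = 1"
    by transfer (simp add: onorm_id[unfolded id_def])
qed
end

lemma bounded_linear_Rep_sqmat: "bounded_linear (Rep_sqmat :: 'n::finite sqmat \<Rightarrow> _)"
proof (rule bounded_linear_intro[where K="CARD('n) * CARD('n)"])
  show "norm (Rep_sqmat x) \<le> norm x * (CARD('n) * CARD('n))" for x :: "'n sqmat"
    using norm_matrix_le_onorm[of "Rep_sqmat x"] by (simp add: norm_sqmat.rep_eq mult.commute)
qed (transfer, simp)+

lemma bounded_linear_Abs_sqmat: "bounded_linear (Abs_sqmat :: real^'n::finite^'n \<Rightarrow> _)"
proof (rule bounded_linear_intro[where K="CARD('n) * CARD('n)"])
  show "norm (Abs_sqmat M) \<le> norm M * (CARD('n) * CARD('n))" for M :: "real^'n^'n"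
    using onorm_le_norm_matrix[of M] by (simp add: norm_sqmat.abs_eq eq_onp_def mult.commute)
qed (simp_all add: plus_sqmat.abs_eq scaleR_sqmat.abs_eq eq_onp_def)

instance sqmat :: (finite) banach
proof
  fix X :: "nat \<Rightarrow> 'a sqmat"
  assume "Cauchy X"
  then have "Cauchy (\<lambda>k. Rep_sqmat (X k))" by (rule bounded_linear.Cauchy[OF bounded_linear_Rep_sqmat])
  then obtain M where "(\<lambda>k. Rep_sqmat (X k)) \<longlonglongrightarrow> M" by (auto simp: Cauchy_convergent_iff convergent_def)
  then have "(\<lambda>k. Abs_sqmat (Rep_sqmat (X k))) \<longlonglongrightarrow> Abs_sqmat M"
    by (rule bounded_linear.tendsto[OF bounded_linear_Abs_sqmat])
  then show "convergent X" by (auto simp: convergent_def Rep_sqmat_inverse)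
qed

lemma mpow_0 [simp]: "mpow M 0 = mat 1"
  by (simp add: mpow_def)

lemma mpow_Suc: "mpow M (Suc k) = mpow M k ** M"
  by (simp add: mpow_def)

lemma mpow_commute: "M ** mpow M k = mpow M k ** M"
  by (induction k) (simp_all add: mpow_Suc matrix_mul_assoc)

lemma Rep_sqmat_power: "Rep_sqmat (x ^ k) = mpow (Rep_sqmat x) k"
  by (induction k) (simp_all add: mpow_Suc mpow_commute one_sqmat.rep_eq times_sqmat.rep_eq)

lemma transpose_mpow: "transpose (mpow M k) = mpow (transpose M) k"
  by (induction k) (simp_all add: mpow_Suc matrix_transpose_mul mpow_commute)

lemma summable_mexp_series: "summable (\<lambda>k. (1 / fact k) *\<^sub>R mpow (M::real^'n::finite^'n) k)"
  using bounded_linear.summable[OF bounded_linear_Rep_sqmat summable_exp_generic[of "Abs_sqmat M"]]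
  by (simp add: scaleR_sqmat.rep_eq Rep_sqmat_power Abs_sqmat_inverse inverse_eq_divide)

lemma mexp_eq_exp: "mexp M = Rep_sqmat (exp (Abs_sqmat M))"
proof -
  have "Rep_sqmat (exp (Abs_sqmat M)) = (\<Sum>k. Rep_sqmat (Abs_sqmat M ^ k /\<^sub>R fact k))"
    unfolding exp_def by (rule bounded_linear.suminf[OF bounded_linear_Rep_sqmat summable_exp_generic])
  then show ?thesis
    by (simp add: mexp_def scaleR_sqmat.rep_eq Rep_sqmat_power Abs_sqmat_inverse inverse_eq_divide)
qed

lemma mexp_zero [simp]: "mexp (0::real^'n::finite^'n) = mat 1"
  by (simp add: mexp_eq_exp one_sqmat.rep_eq flip: zero_sqmat_def)

lemma mexp_transpose: "mexp (transpose M) = transpose (mexp (M::real^'n::finite^'n))"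
proof -
  have "bounded_linear (transpose :: real^'n^'n \<Rightarrow> _)"
    unfolding linear_conv_bounded_linear[symmetric]
    by (rule linearI) (simp_all add: transpose_add transpose_scalar)
  then have "transpose (mexp M) = (\<Sum>k. transpose ((1 / fact k) *\<^sub>R mpow M k))"
    unfolding mexp_def by (rule bounded_linear.suminf[OF _ summable_mexp_series])
  then show ?thesis
    by (simp add: mexp_def transpose_scalar transpose_mpow)
qed

lemma has_vector_derivative_mexp:
  "((\<lambda>t. mexp (t *\<^sub>R M)) has_vector_derivative (M ** mexp (t *\<^sub>R M))) (at t within S)"
proof -
  have "t *\<^sub>R Abs_sqmat M = Abs_sqmat (t *\<^sub>R M)" for t
    by (rule scaleR_sqmat.abs_eq)
  then have mexp_scaleR: "mexp (t *\<^sub>R M) = Rep_sqmat (exp (t *\<^sub>R Abs_sqmat M))" for t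
    by (simp only: mexp_eq_exp)
  have "((\<lambda>t. Rep_sqmat (exp (t *\<^sub>R Abs_sqmat M))) has_vector_derivative
      Rep_sqmat (Abs_sqmat M * exp (t *\<^sub>R Abs_sqmat M))) (at t within S)"
    by (rule bounded_linear.has_vector_derivative[OF bounded_linear_Rep_sqmat
          has_vector_derivative_at_within[OF exp_scaleR_has_vector_derivative_left]])
  then show ?thesis
    by (simp only: mexp_scaleR times_sqmat.rep_eq Abs_sqmat_inverse UNIV_I)
qed

lemma continuous_on_mexp: "continuous_on S (\<lambda>t. mexp (t *\<^sub>R M))"
  by (rule continuous_at_imp_continuous_on)
    (auto intro: has_vector_derivative_continuous[OF has_vector_derivative_mexp[where S=UNIV]])

section \<open>Spectral radius and powers\<close>

definition cart_eigenvalue :: "'a::field^'n^'n \<Rightarrow> 'a \<Rightarrow> bool" where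
  "cart_eigenvalue M \<mu> \<longleftrightarrow> (\<exists>v. v \<noteq> 0 \<and> M *v v = \<mu> *s v)"

lemma cmat_mult: "cmat (X ** Y) = cmat X ** cmat Y"
  by (simp add: cmat_def map_matrix_def matrix_matrix_mult_def Finite_Cartesian_Product.vec_eq_iff of_real_sum)

lemma cmat_add: "cmat (X + Y) = cmat X + cmat Y"
  by (simp add: cmat_def map_matrix_def Finite_Cartesian_Product.vec_eq_iff)

lemma cmat_diff: "cmat (X - Y) = cmat X - cmat Y"
  by (simp add: cmat_def map_matrix_def Finite_Cartesian_Product.vec_eq_iff)

lemma cmat_one: "cmat (mat 1) = mat 1"
  by (simp add: cmat_def map_matrix_def Finite_Cartesian_Product.vec_eq_iff Finite_Cartesian_Product.mat_def)

lemma cmat_scaleR_mult_vec: "cmat (c *\<^sub>R M) *v v = complex_of_real c *s (cmat M *v v)"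
  by (simp add: cmat_def map_matrix_def matrix_vector_mult_def Finite_Cartesian_Product.vec_eq_iff
      sum_distrib_left mult.assoc)

lemma cmat_mult_vec_of_real:
  "cmat M *v (\<chi> i. complex_of_real (x $ i)) = (\<chi> i. complex_of_real ((M *v x) $ i))"
  by (simp add: cmat_def map_matrix_def matrix_vector_mult_def Finite_Cartesian_Product.vec_eq_iff of_real_sum)

lemma mpow_scaleR: "mpow (c *\<^sub>R M) k = c ^ k *\<^sub>R mpow M k"
  by (induction k) (simp_all add: mpow_Suc matrix_scalar_ac scalar_matrix_assoc[symmetric])

text \<open>Square Cartesian matrices are transported to the matrices of \<^theory>\<open>Jordan_Normal_Form.Matrix\<close>
  along a fixed enumeration of the index type, to use the spectral radius bounds proved there.\<close>

definition cart_index :: "nat \<Rightarrow> 'n::finite" where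
  "cart_index = (SOME h. bij_betw h {0..<CARD('n)} UNIV)"

definition mat_of_cart :: "'a^'n::finite^'n \<Rightarrow> 'a mat" where
  "mat_of_cart M = Matrix.mat CARD('n) CARD('n) (\<lambda>(i, j). M $ cart_index i $ cart_index j)"

definition vec_of_cart :: "'a^'n::finite \<Rightarrow> 'a Matrix.vec" where
  "vec_of_cart x = Matrix.vec CARD('n) (\<lambda>i. x $ cart_index i)"

lemma bij_betw_cart_index: "bij_betw (cart_index :: nat \<Rightarrow> 'n::finite) {0..<CARD('n)} UNIV"
proof -
  have "\<exists>h. bij_betw h {0..<CARD('n)} (UNIV :: 'n set)" by (rule ex_bij_betw_nat_finite) simp
  then show ?thesis unfolding cart_index_def by (rule someI_ex)
qed

lemma cart_index_surj: "\<exists>i < CARD('n). cart_index i = (k::'n::finite)"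
  using bij_betw_cart_index[where 'n='n] by (metis UNIV_I atLeastLessThan_iff bij_betw_iff_bijections)

lemma cart_index_inj: "i < CARD('n) \<Longrightarrow> j < CARD('n) \<Longrightarrow> (cart_index i = (cart_index j :: 'n::finite)) = (i = j)"
  using bij_betw_cart_index[where 'n='n] by (auto simp: bij_betw_def inj_on_def)

lemma sum_cart_index: "(\<Sum>i\<in>{0..<CARD('n)}. f (cart_index i)) = (\<Sum>k\<in>UNIV. f (k::'n::finite))"
  by (rule sum.reindex_bij_betw[OF bij_betw_cart_index])

lemma mat_of_cart_carrier: "mat_of_cart (M::'a^'n::finite^'n) \<in> carrier_mat CARD('n) CARD('n)"
  by (simp add: mat_of_cart_def)

lemma dim_mat_of_cart [simp]:
  "dim_row (mat_of_cart (M::'a^'n::finite^'n)) = CARD('n)" "dim_col (mat_of_cart M) = CARD('n)"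
  by (simp_all add: mat_of_cart_def)

lemma vec_of_cart_inject: "vec_of_cart x = vec_of_cart y \<longleftrightarrow> x = (y::'a^'n::finite)"
proof
  assume eq: "vec_of_cart x = vec_of_cart y"
  have "x $ k = y $ k" for k
  proof -
    obtain i where i: "i < CARD('n)" "cart_index i = k" using cart_index_surj by blast
    have "vec_index (vec_of_cart x) i = vec_index (vec_of_cart y) i" by (simp only: eq)
    with i show ?thesis by (simp add: vec_of_cart_def)
  qed
  then show "x = y" by (simp add: Finite_Cartesian_Product.vec_eq_iff)
qed simp

lemma vec_of_cart_onto:
  assumes "v \<in> carrier_vec CARD('n::finite)"
  shows "vec_of_cart (\<chi> k. vec_index v (inv_into {0..<CARD('n)} cart_index k) :: 'a^'n) = v"
  using assms bij_betw_inv_into_left[OF bij_betw_cart_index[where 'n='n]]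
  by (intro eq_vecI) (auto simp: vec_of_cart_def)

lemma vec_of_cart_carrier: "vec_of_cart (x::'a^'n::finite) \<in> carrier_vec CARD('n)"
  by (simp add: vec_of_cart_def)

lemma vec_of_cart_zero: "vec_of_cart (0::'a::zero^'n::finite) = 0\<^sub>v CARD('n)"
  by (auto simp: vec_of_cart_def)

lemma vec_of_cart_smult: "vec_of_cart (c *s x) = c \<cdot>\<^sub>v vec_of_cart x"
  by (auto simp: vec_of_cart_def)

lemma mat_of_cart_mult_vec:
  "mat_of_cart (M::'a::comm_semiring_1^'n::finite^'n) *\<^sub>v vec_of_cart x = vec_of_cart (M *v x)"
proof (rule eq_vecI)
  fix i assume "i < dim_vec (vec_of_cart (M *v x))"
  then have i: "i < CARD('n)" by (simp add: vec_of_cart_def)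
  have "vec_index (mat_of_cart M *\<^sub>v vec_of_cart x) i
      = (\<Sum>l\<in>{0..<CARD('n)}. M $ cart_index i $ cart_index l * x $ cart_index l)"
    using i by (simp add: mat_of_cart_def vec_of_cart_def scalar_prod_def)
  also have "\<dots> = (\<Sum>k\<in>UNIV. M $ cart_index i $ k * x $ k)"
    by (rule sum_cart_index)
  finally show "vec_index (mat_of_cart M *\<^sub>v vec_of_cart x) i = vec_index (vec_of_cart (M *v x)) i"
    using i by (simp add: vec_of_cart_def matrix_vector_mult_def)
qed (simp add: vec_of_cart_def)

lemma mat_of_cart_mult:
  "mat_of_cart (A ** B :: 'a::comm_semiring_1^'n::finite^'n) = mat_of_cart A * mat_of_cart B"
proof (rule eq_matI)
  fix i j assume "i < dim_row (mat_of_cart A * mat_of_cart B)" "j < dim_col (mat_of_cart A * mat_of_cart B)"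
  then have ij: "i < CARD('n)" "j < CARD('n)" by simp_all
  have "(mat_of_cart A * mat_of_cart B) $$ (i, j)
      = (\<Sum>l\<in>{0..<CARD('n)}. A $ cart_index i $ cart_index l * B $ cart_index l $ cart_index j)"
    using ij by (simp add: mat_of_cart_def scalar_prod_def)
  also have "\<dots> = (\<Sum>k\<in>UNIV. A $ cart_index i $ k * B $ k $ cart_index j)"
    by (rule sum_cart_index)
  finally show "mat_of_cart (A ** B) $$ (i, j) = (mat_of_cart A * mat_of_cart B) $$ (i, j)"
    using ij by (simp add: mat_of_cart_def matrix_matrix_mult_def)
qed simp_all

lemma mat_of_cart_one: "mat_of_cart (mat 1 :: 'a::semiring_1^'n::finite^'n) = 1\<^sub>m CARD('n)"
  by (rule eq_matI) (simp_all add: mat_of_cart_def Finite_Cartesian_Product.mat_def cart_index_inj)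

lemma eigenvalue_mat_of_cart: "eigenvalue (mat_of_cart M) \<mu> \<longleftrightarrow> cart_eigenvalue (M::'a::field^'n::finite^'n) \<mu>"
proof
  assume "eigenvalue (mat_of_cart M) \<mu>"
  then obtain v where v: "v \<in> carrier_vec CARD('n)" "v \<noteq> 0\<^sub>v CARD('n)" "mat_of_cart M *\<^sub>v v = \<mu> \<cdot>\<^sub>v v"
    unfolding eigenvalue_def eigenvector_def by auto
  define x :: "'a^'n" where "x = (\<chi> k. vec_index v (inv_into {0..<CARD('n)} cart_index k))"
  have x: "v = vec_of_cart x" unfolding x_def using vec_of_cart_onto[OF v(1)] by simp
  have "x \<noteq> 0" using v(2) by (auto simp: x vec_of_cart_zero)
  moreover have "vec_of_cart (M *v x) = vec_of_cart (\<mu> *s x)"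
    using v(3) by (simp add: x mat_of_cart_mult_vec vec_of_cart_smult)
  ultimately show "cart_eigenvalue M \<mu>" unfolding cart_eigenvalue_def vec_of_cart_inject by blast
next
  assume "cart_eigenvalue M \<mu>"
  then obtain x where "x \<noteq> 0" and Mx: "M *v x = \<mu> *s x" unfolding cart_eigenvalue_def by blast
  then have "vec_of_cart x \<noteq> 0\<^sub>v CARD('n)" by (metis vec_of_cart_zero vec_of_cart_inject)
  moreover have "mat_of_cart M *\<^sub>v vec_of_cart x = \<mu> \<cdot>\<^sub>v vec_of_cart x"
    by (simp add: mat_of_cart_mult_vec Mx vec_of_cart_smult)
  ultimately show "eigenvalue (mat_of_cart M) \<mu>"
    unfolding eigenvalue_def eigenvector_def dim_mat_of_cart using vec_of_cart_carrier by blast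
qed

lemma mat_of_cart_mpow: "mat_of_cart (cmat (mpow B k)) = mat_of_cart (cmat B) ^\<^sub>m k"
  by (induction k) (simp_all add: mpow_Suc cmat_mult mat_of_cart_mult cmat_one mat_of_cart_one)

lemma cart_eigenvalue_le_spectral_radius:
  assumes "cart_eigenvalue A \<mu>"
  shows "cmod \<mu> \<le> spectral_radius (mat_of_cart (A::complex^'n::finite^'n))"
proof -
  have "cmod \<mu> \<in> cmod ` spectrum (mat_of_cart A)"
    using assms by (simp add: spectrum_def eigenvalue_mat_of_cart)
  then show ?thesis by (rule spectral_radius_mem_max(2)[OF mat_of_cart_carrier zero_less_card_finite])
qed

lemma spectral_radius_attained:
  obtains \<mu> where "cart_eigenvalue A \<mu>" "spectral_radius (mat_of_cart (A::complex^'n::finite^'n)) = cmod \<mu>"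
  using spectral_radius_mem_max(1)[OF mat_of_cart_carrier zero_less_card_finite, of A]
  by (auto simp: spectrum_def eigenvalue_mat_of_cart)

lemma cart_eigenvalue_cmat_scaleR:
  assumes "cart_eigenvalue (cmat (c *\<^sub>R B)) \<mu>" and "c \<noteq> 0"
  shows "cart_eigenvalue (cmat B) (\<mu> / complex_of_real c)"
proof -
  from assms(1) obtain v where "v \<noteq> 0" and v: "complex_of_real c *s (cmat B *v v) = \<mu> *s v"
    unfolding cart_eigenvalue_def cmat_scaleR_mult_vec by blast
  have "cmat B *v v = (\<mu> / complex_of_real c) *s v"
    using arg_cong[OF v, of "\<lambda>w. (1 / complex_of_real c) *s w"] assms(2)
    by (simp add: vector_smult_assoc)
  with \<open>v \<noteq> 0\<close> show ?thesis unfolding cart_eigenvalue_def by blast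
qed

text \<open>The rate \<open>r\<close> is taken strictly between the spectral radius and 1; the powers of \<open>B / r\<close>
  are then bounded.\<close>

lemma mpow_geometric_decay:
  fixes B :: "real^'n::finite^'n"
  assumes eigenvalues: "\<And>\<mu>. cart_eigenvalue (cmat B) \<mu> \<Longrightarrow> cmod \<mu> < 1"
  shows "\<exists>c r. 0 < r \<and> r < 1 \<and> (\<forall>k i j. \<bar>mpow B k $ i $ j\<bar> \<le> c * r ^ k)"
proof -
  define \<rho> where "\<rho> = spectral_radius (mat_of_cart (cmat B))"
  obtain \<mu>\<^sub>0 where "cart_eigenvalue (cmat B) \<mu>\<^sub>0" "\<rho> = cmod \<mu>\<^sub>0"
    unfolding \<rho>_def by (rule spectral_radius_attained)
  then have "0 \<le> \<rho>" "\<rho> < 1" using eigenvalues by auto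
  define r where "r = (1 + \<rho>) / 2"
  have r: "0 < r" "r < 1" "\<rho> < r" using \<open>0 \<le> \<rho>\<close> \<open>\<rho> < 1\<close> by (auto simp: r_def)
  have scaled_eigenvalues: "cmod \<mu> < 1" if "cart_eigenvalue (cmat ((1 / r) *\<^sub>R B)) \<mu>" for \<mu>
  proof -
    have "cmod (\<mu> / complex_of_real (1 / r)) \<le> \<rho>"
      unfolding \<rho>_def using cart_eigenvalue_cmat_scaleR[OF that] r(1)
      by (intro cart_eigenvalue_le_spectral_radius) simp
    then have "cmod \<mu> * r \<le> \<rho>" using r(1) by (simp add: norm_divide norm_mult)
    then have "cmod \<mu> * r < 1 * r" using r(3) by linarith
    then show ?thesis using mult_less_cancel_right_pos[OF r(1)] by blast
  qed
  define M where "M = mat_of_cart (cmat ((1 / r) *\<^sub>R B))"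
  obtain \<mu>\<^sub>1 where "cart_eigenvalue (cmat ((1 / r) *\<^sub>R B)) \<mu>\<^sub>1" "spectral_radius M = cmod \<mu>\<^sub>1"
    unfolding M_def by (rule spectral_radius_attained)
  then have "spectral_radius M < 1" using scaled_eigenvalues by simp
  then obtain c where c: "\<And>k. norm_bound (M ^\<^sub>m k) c"
    using spectral_radius_jnf_norm_bound_less_1_upper_triangular[OF mat_of_cart_carrier]
    unfolding M_def by blast
  have "\<bar>mpow B k $ i $ j\<bar> \<le> c * r ^ k" for k i j
  proof -
    obtain i' j' where ij: "i' < CARD('n)" "cart_index i' = i" "j' < CARD('n)" "cart_index j' = j"
      using cart_index_surj by metis
    have "M ^\<^sub>m k = mat_of_cart (cmat ((1 / r) ^ k *\<^sub>R mpow B k))"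
      by (simp only: M_def mat_of_cart_mpow[symmetric] mpow_scaleR)
    then have "norm ((M ^\<^sub>m k) $$ (i', j')) = (1 / r) ^ k * \<bar>mpow B k $ i $ j\<bar>"
      using ij r(1) by (simp add: mat_of_cart_def cmat_def map_matrix_def norm_mult norm_power norm_divide)
    then have "\<bar>mpow B k $ i $ j\<bar> = r ^ k * norm ((M ^\<^sub>m k) $$ (i', j'))"
      using r(1) by (simp add: power_one_over field_simps)
    also have "\<dots> \<le> r ^ k * c"
      using c[of k] ij r(1) unfolding norm_bound_def by (simp add: M_def mult_left_mono)
    finally show ?thesis by (simp add: mult.commute)
  qed
  with r show ?thesis by blast
qed

section \<open>Exponential stability of Hurwitz matrices\<close>

lemma hurwitz_one_minus_left_invertible:
  assumes "hurwitz A"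
  obtains N where "N ** (mat 1 - A) = mat 1"
proof -
  have "x = 0" if "(mat 1 - A) *v x = 0" for x
  proof (rule ccontr)
    assume "x \<noteq> 0"
    define v where "v = (\<chi> i. complex_of_real (x $ i))"
    have "A *v x = x" using that by (simp add: matrix_vector_mult_diff_rdistrib)
    then have "cmat A *v v = 1 *s v" unfolding v_def by (simp add: cmat_mult_vec_of_real)
    moreover have "v \<noteq> 0" using \<open>x \<noteq> 0\<close> by (simp add: v_def Finite_Cartesian_Product.vec_eq_iff)
    ultimately have "Re 1 < 0" using assms unfolding hurwitz_def by blast
    then show False by simp
  qed
  then show ?thesis using matrix_left_invertible_ker that by blast
qed

text \<open>Division by zero makes the case \<open>\<mu> = -1\<close> harmless: the quotient is then \<open>0\<close>.\<close>

lemma cmod_less_1_if_Re_cayley_neg: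
  assumes "Re ((\<mu> - 1) / (\<mu> + 1)) < 0"
  shows "cmod \<mu> < 1"
proof -
  have "Re ((\<mu> - 1) / (\<mu> + 1)) = ((cmod \<mu>)\<^sup>2 - 1) / (cmod (\<mu> + 1))\<^sup>2"
    unfolding Re_divide cmod_power2 by (simp add: algebra_simps power2_eq_square)
  with assms have "(cmod \<mu>)\<^sup>2 < 1\<^sup>2" by (simp add: divide_less_0_iff)
  then show ?thesis by (rule power_less_imp_less_base) simp
qed

text \<open>The Cayley transform \<open>(I - A)\<^sup>-\<^sup>1 (I + A)\<close> maps the open left half plane into the open unit disc.\<close>

lemma cayley_transform_eigenvalue:
  fixes A N :: "real^'n::finite^'n"
  assumes "hurwitz A" and inv: "N ** (mat 1 - A) = mat 1"
    and "cart_eigenvalue (cmat (N ** (mat 1 + A))) \<mu>"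
  shows "cmod \<mu> < 1"
proof -
  obtain v where "v \<noteq> 0" and ev: "cmat (N ** (mat 1 + A)) *v v = \<mu> *s v"
    using assms(3) unfolding cart_eigenvalue_def by blast
  let ?a = "cmat A *v v"
  have "(mat 1 - A) ** N = mat 1" by (rule matrix_left_right_inverse1[OF inv])
  then have "(mat 1 - A) ** (N ** (mat 1 + A)) = mat 1 + A" by (simp add: matrix_mul_assoc)
  then have "cmat (mat 1 - A) *v (cmat (N ** (mat 1 + A)) *v v) = v + ?a"
    by (simp add: matrix_vector_mul_assoc cmat_add cmat_one matrix_vector_mult_add_rdistrib
        flip: cmat_mult)
  moreover have "cmat (mat 1 - A) *v (cmat (N ** (mat 1 + A)) *v v) = \<mu> *s (v - ?a)"
    by (simp add: ev cmat_diff cmat_one matrix_vector_mult_diff_rdistrib vector_scalar_commute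
        vector_ssub_ldistrib)
  ultimately have eq: "(\<mu> + 1) * ?a $ i = (\<mu> - 1) * v $ i" for i
    by (simp add: Finite_Cartesian_Product.vec_eq_iff algebra_simps)
  have "\<mu> + 1 \<noteq> 0"
  proof
    assume "\<mu> + 1 = 0"
    then have "v $ i = 0" for i using eq[of i] by (simp add: add_eq_0_iff2)
    with \<open>v \<noteq> 0\<close> show False by (simp add: Finite_Cartesian_Product.vec_eq_iff)
  qed
  with eq have "cmat A *v v = ((\<mu> - 1) / (\<mu> + 1)) *s v"
    by (simp add: Finite_Cartesian_Product.vec_eq_iff field_simps)
  with \<open>v \<noteq> 0\<close> assms(1) have "Re ((\<mu> - 1) / (\<mu> + 1)) < 0" unfolding hurwitz_def by blast
  then show ?thesis by (rule cmod_less_1_if_Re_cayley_neg)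
qed

lemma mpow_contractive:
  fixes B :: "real^'n::finite^'n"
  assumes "\<And>\<mu>. cart_eigenvalue (cmat B) \<mu> \<Longrightarrow> cmod \<mu> < 1"
  obtains K where "0 < K" "\<And>u. norm (mpow B K *v u) \<le> norm u / 2"
proof -
  obtain c r where r: "0 < r" "r < 1" and decay: "\<And>k i j. \<bar>mpow B k $ i $ j\<bar> \<le> c * r ^ k"
    using mpow_geometric_decay[OF assms] by blast
  define a where "a = real CARD('n) * real CARD('n) * c"
  have "0 \<le> c" using order_trans[OF abs_ge_zero decay[of 0]] by simp
  then have "0 \<le> a" by (simp add: a_def)
  have "0 < 1 / (2 * (a + 1))" using \<open>0 \<le> a\<close> by simp
  then obtain K0 where K0: "r ^ K0 < 1 / (2 * (a + 1))"
    using real_arch_pow_inv r(2) by blast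
  have "onorm (\<lambda>u. mpow B (Suc K0) *v u) \<le> real CARD('n) * real CARD('n) * (c * r ^ Suc K0)"
    by (rule onorm_le_matrix_component) (rule decay)
  also have "\<dots> = (a * r) * r ^ K0" by (simp add: a_def)
  also have "\<dots> \<le> (a + 1) * r ^ K0"
    using r \<open>0 \<le> a\<close> mult_left_le[of r a] by (intro mult_right_mono) auto
  also have "\<dots> \<le> 1 / 2"
    using K0 \<open>0 \<le> a\<close> by (simp add: field_simps)
  finally have onorm_half: "onorm (\<lambda>u. mpow B (Suc K0) *v u) \<le> 1 / 2" .
  have "norm (mpow B (Suc K0) *v u) \<le> norm u / 2" for u
  proof -
    have "norm (mpow B (Suc K0) *v u) \<le> onorm (\<lambda>u. mpow B (Suc K0) *v u) * norm u"
      by (rule onorm[OF matrix_vector_mul_bounded_linear])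
    also have "\<dots> \<le> 1 / 2 * norm u" using onorm_half by (rule mult_right_mono) simp
    finally show ?thesis by simp
  qed
  then show ?thesis using that by blast
qed

text \<open>\<open>X\<close> truncates the series \<open>\<Sum>\<^sub>k (B\<^sup>k)\<^sup>T B\<^sup>k\<close>, which solves the Stein equation
  \<open>X - B\<^sup>T X B = I\<close>.\<close>

lemma discrete_lyapunov_function:
  fixes B :: "real^'n::finite^'n"
  assumes "0 < K" and contractive: "\<And>u. norm (mpow B K *v u) \<le> norm u / 2"
  defines "X \<equiv> \<Sum>k<K. transpose (mpow B k) ** mpow B k"
  shows "x \<bullet> x \<le> x \<bullet> (X *v x)"
    and "(B *v u) \<bullet> (X *v (B *v u)) - u \<bullet> (X *v u) \<le> - 3/4 * (u \<bullet> u)"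
proof -
  have form: "x \<bullet> (X *v y) = (\<Sum>k<K. (mpow B k *v x) \<bullet> (mpow B k *v y))" for x y
    unfolding X_def by (simp add: sum_matrix_vector_mult inner_sum_right inner_transpose_mult_self)
  obtain K0 where K: "K = Suc K0" using \<open>0 < K\<close> gr0_implies_Suc by blast
  have "x \<bullet> (X *v x) = x \<bullet> x + (\<Sum>k<K0. (mpow B (Suc k) *v x) \<bullet> (mpow B (Suc k) *v x))"
    unfolding form K sum.lessThan_Suc_shift by simp
  moreover have "0 \<le> (\<Sum>k<K0. (mpow B (Suc k) *v x) \<bullet> (mpow B (Suc k) *v x))"
    by (intro sum_nonneg) simp
  ultimately show "x \<bullet> x \<le> x \<bullet> (X *v x)" by simp
  have "(B *v u) \<bullet> (X *v (B *v u)) - u \<bullet> (X *v u)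
      = (\<Sum>k<K. (mpow B (Suc k) *v u) \<bullet> (mpow B (Suc k) *v u) - (mpow B k *v u) \<bullet> (mpow B k *v u))"
    unfolding form by (simp add: sum_subtractf matrix_vector_mul_assoc mpow_Suc)
  also have "\<dots> = norm (mpow B K *v u) ^ 2 - norm u ^ 2"
    by (subst sum_lessThan_telescope) (simp add: power2_norm_eq_inner)
  also have "\<dots> \<le> (norm u / 2) ^ 2 - norm u ^ 2"
    using contractive[of u] by (simp add: power_mono)
  also have "\<dots> = - 3/4 * (u \<bullet> u)" by (simp add: power2_norm_eq_inner[symmetric] power_divide)
  finally show "(B *v u) \<bullet> (X *v (B *v u)) - u \<bullet> (X *v u) \<le> - 3/4 * (u \<bullet> u)" .
qed

lemma lyapunov_inequality_of_cayley:
  fixes A N X :: "real^'n::finite^'n"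
  defines "B \<equiv> N ** (mat 1 + A)" and "\<delta> \<equiv> 3 / (8 * (onorm (\<lambda>y. N *v y) + 1)\<^sup>2)"
  assumes N: "N ** (mat 1 - A) = mat 1"
    and discrete: "\<And>u. (B *v u) \<bullet> (X *v (B *v u)) - u \<bullet> (X *v u) \<le> - 3/4 * (u \<bullet> u)"
  shows "(A *v x) \<bullet> (X *v x) + x \<bullet> (X *v (A *v x)) \<le> - \<delta> * (x \<bullet> x)"
proof -
  define u where "u = x - A *v x"
  have "(mat 1 + A) *v u = (mat 1 - A) *v (x + A *v x)"
    by (simp add: u_def matrix_vector_mult_add_rdistrib matrix_vector_mult_diff_rdistrib
        matrix_vector_right_distrib matrix_vector_mult_diff_distrib)
  then have "B *v u = N *v ((mat 1 - A) *v (x + A *v x))" by (simp add: B_def flip: matrix_vector_mul_assoc)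
  then have Bu: "B *v u = x + A *v x" by (simp add: matrix_vector_mul_assoc N)
  \<comment> \<open>The discrete inequality for \<open>B\<close> at \<open>u\<close> is twice the continuous one for \<open>A\<close> at \<open>x\<close>.\<close>
  have "2 * ((A *v x) \<bullet> (X *v x) + x \<bullet> (X *v (A *v x))) = (B *v u) \<bullet> (X *v (B *v u)) - u \<bullet> (X *v u)"
    unfolding Bu by (simp add: u_def matrix_vector_right_distrib matrix_vector_mult_diff_distrib
        inner_add_left inner_add_right inner_diff_left inner_diff_right)
  with discrete[of u] have lyap_u: "(A *v x) \<bullet> (X *v x) + x \<bullet> (X *v (A *v x)) \<le> - 3/8 * (u \<bullet> u)"
    by simp
  have "u = (mat 1 - A) *v x" by (simp add: u_def matrix_vector_mult_diff_rdistrib)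
  then have "norm x = norm (N *v u)" by (simp add: matrix_vector_mul_assoc N)
  also have "\<dots> \<le> (onorm (\<lambda>y. N *v y) + 1) * norm u"
    using onorm[OF matrix_vector_mul_bounded_linear, of N u] norm_ge_zero[of u]
    unfolding distrib_right by linarith
  finally have "x \<bullet> x \<le> (onorm (\<lambda>y. N *v y) + 1)\<^sup>2 * (u \<bullet> u)"
    by (metis norm_ge_zero power2_norm_eq_inner power_mono power_mult_distrib)
  moreover have "0 \<le> \<delta>" by (simp add: \<delta>_def)
  ultimately have "\<delta> * (x \<bullet> x) \<le> \<delta> * ((onorm (\<lambda>y. N *v y) + 1)\<^sup>2 * (u \<bullet> u))"
    by (rule mult_left_mono)
  also have "\<dots> = 3/8 * (u \<bullet> u)"
    unfolding \<delta>_def using onorm_matrix_nonneg[of N] by (simp add: field_simps add_nonneg_pos)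
  finally show ?thesis using lyap_u by linarith
qed

lemma hurwitz_lyapunov_function:
  fixes A :: "real^'n::finite^'n"
  assumes "hurwitz A"
  shows "\<exists>\<delta> X. 0 < \<delta> \<and> (\<forall>x. x \<bullet> x \<le> x \<bullet> (X *v x)) \<and>
    (\<forall>x. (A *v x) \<bullet> (X *v x) + x \<bullet> (X *v (A *v x)) \<le> - \<delta> * (x \<bullet> x))"
proof -
  obtain N where N: "N ** (mat 1 - A) = mat 1" by (rule hurwitz_one_minus_left_invertible[OF assms])
  define B where "B = N ** (mat 1 + A)"
  obtain K where "0 < K" and K: "\<And>u. norm (mpow B K *v u) \<le> norm u / 2"
    using mpow_contractive cayley_transform_eigenvalue[OF assms N] unfolding B_def by metis
  define X where "X = (\<Sum>k<K. transpose (mpow B k) ** mpow B k)"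
  have "\<forall>x. x \<bullet> x \<le> x \<bullet> (X *v x)"
    unfolding X_def using discrete_lyapunov_function(1)[OF \<open>0 < K\<close> K] by blast
  moreover have "\<forall>x. (A *v x) \<bullet> (X *v x) + x \<bullet> (X *v (A *v x))
      \<le> - (3 / (8 * (onorm (\<lambda>y. N *v y) + 1)\<^sup>2)) * (x \<bullet> x)"
    using lyapunov_inequality_of_cayley[OF N discrete_lyapunov_function(2)[OF \<open>0 < K\<close> K, unfolded B_def]]
    unfolding X_def B_def by blast
  moreover have "0 < 3 / (8 * (onorm (\<lambda>y. N *v y) + 1)\<^sup>2)"
    using onorm_matrix_nonneg[of N] by (simp add: add_nonneg_pos)
  ultimately show ?thesis by blast
qed

lemma has_vector_derivative_trajectory:
  fixes A :: "real^'n::finite^'n" and x :: "real^'n"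
  shows "((\<lambda>t. mexp (t *\<^sub>R A) *v x) has_vector_derivative (A *v (mexp (t *\<^sub>R A) *v x))) (at t within S)"
proof -
  have "bounded_linear (\<lambda>M::real^'n^'n. M *v x)"
    unfolding linear_conv_bounded_linear[symmetric]
    by (rule linearI) (simp_all add: matrix_vector_mult_add_rdistrib scaleR_matrix_vector_assoc)
  from bounded_linear.has_vector_derivative[OF this has_vector_derivative_mexp]
  show ?thesis by (simp add: matrix_vector_mul_assoc)
qed

lemma has_real_derivative_trajectory_form:
  fixes A Z :: "real^'n::finite^'n"
  shows "((\<lambda>t. (mexp (t *\<^sub>R A) *v x) \<bullet> (Z *v (mexp (t *\<^sub>R A) *v w))) has_real_derivative
     (A *v (mexp (t *\<^sub>R A) *v x)) \<bullet> (Z *v (mexp (t *\<^sub>R A) *v w))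
      + (mexp (t *\<^sub>R A) *v x) \<bullet> (Z *v (A *v (mexp (t *\<^sub>R A) *v w)))) (at t within S)"
  unfolding has_real_derivative_iff_has_vector_derivative
  using bounded_bilinear.has_vector_derivative[OF bounded_bilinear_inner has_vector_derivative_trajectory
      bounded_linear.has_vector_derivative[OF matrix_vector_mul_bounded_linear has_vector_derivative_trajectory]]
  by (simp add: add.commute)

lemma continuous_on_trajectory: "continuous_on S (\<lambda>t. mexp (t *\<^sub>R A) *v (x::real^'n::finite))"
  by (rule continuous_at_imp_continuous_on)
    (auto intro: has_vector_derivative_continuous[OF has_vector_derivative_trajectory[where S=UNIV]])

lemma lyapunov_exp_decay:
  fixes A X :: "real^'n::finite^'n"
  assumes lower: "\<And>x. x \<bullet> x \<le> x \<bullet> (X *v x)"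
    and decrease: "\<And>x. (A *v x) \<bullet> (X *v x) + x \<bullet> (X *v (A *v x)) \<le> - \<delta> * (x \<bullet> x)"
    and "0 < \<delta>"
  shows "\<exists>\<epsilon> C. 0 < \<epsilon> \<and>
    (\<forall>x t. 0 \<le> t \<longrightarrow> norm (mexp (t *\<^sub>R A) *v x) ^ 2 \<le> C * norm x ^ 2 * exp (- \<epsilon> * t))"
proof -
  define C where "C = onorm (\<lambda>v. X *v v) + 1"
  have "0 < C" unfolding C_def using onorm_matrix_nonneg[of X] by linarith
  have upper: "x \<bullet> (X *v x) \<le> C * (x \<bullet> x)" for x
    using inner_le_onorm[of x X] inner_ge_zero[of x] unfolding C_def distrib_right by linarith
  define \<epsilon> where "\<epsilon> = \<delta> / C"
  have "0 < \<epsilon>" unfolding \<epsilon>_def using \<open>0 < \<delta>\<close> \<open>0 < C\<close> by simp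
  have "norm (mexp (t *\<^sub>R A) *v x) ^ 2 \<le> C * norm x ^ 2 * exp (- \<epsilon> * t)" if "0 \<le> t" for x t
  proof -
    define y where "y s = mexp (s *\<^sub>R A) *v x" for s
    define V where "V s = y s \<bullet> (X *v y s)" for s
    \<comment> \<open>\<open>V\<close> decays at rate \<open>\<epsilon>\<close>, because \<open>V' \<le> -\<delta> |y|\<^sup>2 \<le> -\<epsilon> V\<close>.\<close>
    have "V t * exp (\<epsilon> * t) \<le> V 0 * exp (\<epsilon> * 0)"
    proof (rule DERIV_nonpos_imp_nonincreasing[OF \<open>0 \<le> t\<close>])
      fix s
      let ?V' = "(A *v y s) \<bullet> (X *v y s) + y s \<bullet> (X *v (A *v y s))"
      have "((\<lambda>s. V s * exp (\<epsilon> * s)) has_real_derivative (?V' + \<epsilon> * V s) * exp (\<epsilon> * s)) (at s)"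
        unfolding V_def y_def
        by (auto intro!: derivative_eq_intros has_real_derivative_trajectory_form simp: algebra_simps)
      moreover have "\<epsilon> * V s \<le> \<delta> * (y s \<bullet> y s)"
        using mult_left_mono[OF upper[of "y s"], of \<epsilon>] \<open>0 < \<epsilon>\<close> \<open>0 < C\<close>
        by (simp add: V_def \<epsilon>_def)
      then have "(?V' + \<epsilon> * V s) * exp (\<epsilon> * s) \<le> 0"
        using decrease[of "y s"] by (simp add: mult_nonpos_nonneg)
      ultimately show "\<exists>y. ((\<lambda>s. V s * exp (\<epsilon> * s)) has_real_derivative y) (at s) \<and> y \<le> 0" by blast
    qed
    moreover have "V 0 \<le> C * norm x ^ 2" using upper[of x] by (simp add: V_def y_def power2_norm_eq_inner)
    ultimately have "V t \<le> C * norm x ^ 2 * exp (- \<epsilon> * t)" by (simp add: exp_minus field_simps)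
    moreover have "norm (y t) ^ 2 \<le> V t" using lower by (simp add: V_def power2_norm_eq_inner)
    ultimately show ?thesis by (simp add: y_def)
  qed
  with \<open>0 < \<epsilon>\<close> show ?thesis by blast
qed

lemma hurwitz_exp_decay:
  assumes "hurwitz (A::real^'n::finite^'n)"
  shows "\<exists>\<epsilon> C. 0 < \<epsilon> \<and>
    (\<forall>x t. 0 \<le> t \<longrightarrow> norm (mexp (t *\<^sub>R A) *v x) ^ 2 \<le> C * norm x ^ 2 * exp (- \<epsilon> * t))"
proof -
  obtain \<delta> X where "0 < \<delta>" "\<And>x. x \<bullet> x \<le> x \<bullet> (X *v x)"
    "\<And>x. (A *v x) \<bullet> (X *v x) + x \<bullet> (X *v (A *v x)) \<le> - \<delta> * (x \<bullet> x)"
    using hurwitz_lyapunov_function[OF assms] by blast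
  from this(2,3,1) show ?thesis by (rule lyapunov_exp_decay)
qed

section \<open>Lyapunov equations and inequalities\<close>

lemma tendsto_exp_neg_at_top: "0 < \<epsilon> \<Longrightarrow> ((\<lambda>t::real. exp (- \<epsilon> * t)) \<longlongrightarrow> 0) at_top"
  by (rule filterlim_compose[OF exp_at_bot filterlim_tendsto_neg_mult_at_bot[OF tendsto_const _ filterlim_ident]])
    simp

lemma hurwitz_trajectory_tendsto_zero:
  assumes "hurwitz (A::real^'n::finite^'n)"
  shows "((\<lambda>t. mexp (t *\<^sub>R A) *v x) \<longlongrightarrow> 0) at_top"
proof -
  obtain \<epsilon> C where "0 < \<epsilon>"
    and decay: "\<forall>x t. 0 \<le> t \<longrightarrow> norm (mexp (t *\<^sub>R A) *v x) ^ 2 \<le> C * norm x ^ 2 * exp (- \<epsilon> * t)"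
    using hurwitz_exp_decay[OF assms] by blast
  define b where "b t = sqrt (C * norm x ^ 2 * exp (- \<epsilon> * t))" for t
  have le: "norm (mexp (t *\<^sub>R A) *v x) \<le> b t" if "0 \<le> t" for t
  proof -
    have "norm (mexp (t *\<^sub>R A) *v x) ^ 2 \<le> C * norm x ^ 2 * exp (- \<epsilon> * t)"
      using decay that by simp
    then show ?thesis unfolding b_def by (rule real_le_rsqrt)
  qed
  have "\<forall>\<^sub>F t in at_top. norm (mexp (t *\<^sub>R A) *v x) \<le> b t"
    using eventually_ge_at_top[of 0] by (rule eventually_mono) (rule le)
  moreover have "(b \<longlongrightarrow> sqrt (C * norm x ^ 2 * 0)) at_top"
    unfolding b_def by (intro tendsto_intros tendsto_exp_neg_at_top \<open>0 < \<epsilon>\<close>)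
  then have "(b \<longlongrightarrow> 0) at_top" by simp
  ultimately show ?thesis by (rule Lim_null_comparison)
qed

lemma lyapunov_equation_unique:
  fixes A Z :: "real^'n::finite^'n"
  assumes "hurwitz A" and "transpose A ** Z + Z ** A = 0"
  shows "Z = 0"
proof -
  have "x \<bullet> (Z *v w) = 0" for x w
  proof -
    define \<phi> where "\<phi> t = (mexp (t *\<^sub>R A) *v x) \<bullet> (Z *v (mexp (t *\<^sub>R A) *v w))" for t
    have "\<forall>t. (\<phi> has_real_derivative 0) (at t)"
      using has_real_derivative_trajectory_form[of A x Z w _ UNIV] assms(2)
      unfolding \<phi>_def inner_lyapunov_operator by simp
    then have "\<forall>t. \<phi> 0 = \<phi> t" using DERIV_isconst_all by metis
    then have "(\<phi> \<longlongrightarrow> \<phi> 0) at_top"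
      by (intro Lim_transform_eventually[OF tendsto_const] always_eventually)
    moreover have "(\<phi> \<longlongrightarrow> 0 \<bullet> (Z *v 0)) at_top"
      unfolding \<phi>_def
      by (intro tendsto_inner hurwitz_trajectory_tendsto_zero[OF assms(1)]
          bounded_linear.tendsto[OF matrix_vector_mul_bounded_linear])
    ultimately have "\<phi> 0 = 0" using tendsto_unique[OF trivial_limit_at_top_linorder] by fastforce
    then show ?thesis by (simp add: \<phi>_def)
  qed
  then have "(Z *v w) \<bullet> (Z *v w) = 0" for w by blast
  then show ?thesis by (simp add: matrix_eq)
qed

lemma lyapunov_solution_symmetric:
  fixes A P Q :: "real^'n::finite^'n"
  assumes "hurwitz A" and "transpose Q = Q" and "transpose A ** P + P ** A + Q = 0"
  shows "transpose P = P"
proof -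
  have "transpose A ** (P - transpose P) + (P - transpose P) ** A
      = (transpose A ** P + P ** A + Q) - transpose (transpose A ** P + P ** A + Q)"
    by (simp add: assms(2) matrix_diff_ldistrib matrix_diff_rdistrib transpose_add matrix_transpose_mul)
  also have "\<dots> = 0" by (simp add: assms(3))
  finally have "P - transpose P = 0" by (rule lyapunov_equation_unique[OF assms(1)])
  then show ?thesis by simp
qed

lemma integrable_on_exp_bound:
  fixes f :: "real \<Rightarrow> 'a::euclidean_space"
  assumes "continuous_on {0..} f" and "0 < \<epsilon>" and "\<And>t. 0 \<le> t \<Longrightarrow> norm (f t) \<le> M * exp (- \<epsilon> * t)"
  shows "f integrable_on {0..}"
proof (rule measurable_bounded_by_integrable_imp_integrable)
  show "f \<in> borel_measurable (lebesgue_on {0..})"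
    by (rule continuous_imp_measurable_on_sets_lebesgue[OF assms(1)]) auto
  show "(\<lambda>t. M * exp (- \<epsilon> * t)) integrable_on {0..}"
    using integrable_on_cmult_left[OF integrable_on_exp_minus_to_infinity[OF assms(2)], of M] by simp
qed (use assms(3) in auto)

lemma integrable_trajectory_norm_square:
  assumes "hurwitz (A::real^'n::finite^'n)"
  shows "(\<lambda>t. norm (mexp (t *\<^sub>R A) *v x) ^ 2) integrable_on {0..}"
proof -
  obtain \<epsilon> C where "0 < \<epsilon>"
    and decay: "\<forall>x t. 0 \<le> t \<longrightarrow> norm (mexp (t *\<^sub>R A) *v x) ^ 2 \<le> C * norm x ^ 2 * exp (- \<epsilon> * t)"
    using hurwitz_exp_decay[OF assms] by blast
  have "continuous_on {0..} (\<lambda>t. norm (mexp (t *\<^sub>R A) *v x) ^ 2)"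
    by (intro continuous_on_power continuous_on_norm continuous_on_trajectory)
  then show ?thesis
    by (rule integrable_on_exp_bound[OF _ \<open>0 < \<epsilon>\<close>, where M="C * norm x ^ 2"]) (use decay in simp)
qed

lemma lyapunov_form_along_trajectory:
  fixes A \<Delta> :: "real^'n::finite^'n"
  assumes "0 \<le> T"
    and lyapunov: "\<And>y. - (y \<bullet> ((transpose A ** \<Delta> + \<Delta> ** A) *v y)) \<le> c * (y \<bullet> y)"
  shows "x \<bullet> (\<Delta> *v x) - (mexp (T *\<^sub>R A) *v x) \<bullet> (\<Delta> *v (mexp (T *\<^sub>R A) *v x))
    \<le> c * integral {0..T} (\<lambda>t. norm (mexp (t *\<^sub>R A) *v x) ^ 2)"
proof -
  define y where "y t = mexp (t *\<^sub>R A) *v x" for t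
  define \<phi> where "\<phi> t = y t \<bullet> (\<Delta> *v y t)" for t
  have ftc: "((\<lambda>t. y t \<bullet> ((transpose A ** \<Delta> + \<Delta> ** A) *v y t)) has_integral \<phi> T - \<phi> 0) {0..T}"
  proof (rule fundamental_theorem_of_calculus[OF assms(1)])
    fix t
    show "(\<phi> has_vector_derivative y t \<bullet> ((transpose A ** \<Delta> + \<Delta> ** A) *v y t)) (at t within {0..T})"
      using has_real_derivative_trajectory_form[of A x \<Delta> x t "{0..T}"]
      unfolding \<phi>_def y_def inner_lyapunov_operator has_real_derivative_iff_has_vector_derivative .
  qed
  have "(\<lambda>t. norm (y t) ^ 2) integrable_on {0..T}"
    unfolding y_def
    by (intro integrable_continuous_interval continuous_on_power continuous_on_norm continuous_on_trajectory)
  from has_integral_neg[OF ftc] has_integral_mult_right[OF integrable_integral[OF this]]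
  have "- (\<phi> T - \<phi> 0) \<le> c * integral {0..T} (\<lambda>t. norm (y t) ^ 2)"
  proof (rule has_integral_le)
    show "- (y t \<bullet> ((transpose A ** \<Delta> + \<Delta> ** A) *v y t)) \<le> c * norm (y t) ^ 2" for t
      using lyapunov[of "y t"] by (simp add: power2_norm_eq_inner)
  qed
  then show ?thesis unfolding \<phi>_def y_def by simp
qed

lemma quadratic_form_le_of_lyapunov_inequality:
  fixes A \<Delta> :: "real^'n::finite^'n"
  assumes "hurwitz A" and "0 \<le> c"
    and lyapunov: "\<And>y. - (y \<bullet> ((transpose A ** \<Delta> + \<Delta> ** A) *v y)) \<le> c * (y \<bullet> y)"
  shows "x \<bullet> (\<Delta> *v x) \<le> c * integral {0..} (\<lambda>t. norm (mexp (t *\<^sub>R A) *v x) ^ 2)"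
proof -
  define h where "h t = norm (mexp (t *\<^sub>R A) *v x) ^ 2" for t
  define \<phi> where "\<phi> t = (mexp (t *\<^sub>R A) *v x) \<bullet> (\<Delta> *v (mexp (t *\<^sub>R A) *v x))" for t
  have h_int: "h integrable_on {0..}"
    unfolding h_def by (rule integrable_trajectory_norm_square[OF assms(1)])
  have bound: "\<phi> 0 \<le> c * integral {0..} h + \<phi> T" if "0 \<le> T" for T
  proof -
    have "\<phi> 0 - \<phi> T \<le> c * integral {0..T} h"
      using lyapunov_form_along_trajectory[OF that lyapunov, of x] unfolding \<phi>_def h_def by simp
    also have "\<dots> \<le> c * integral {0..} h"
      using h_int integrable_on_subinterval[OF h_int, of 0 T]
      by (intro mult_left_mono[OF integral_subset_le \<open>0 \<le> c\<close>]) (auto simp: h_def)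
    finally show ?thesis by simp
  qed
  have "(\<phi> \<longlongrightarrow> 0 \<bullet> (\<Delta> *v 0)) at_top"
    unfolding \<phi>_def
    by (intro tendsto_inner hurwitz_trajectory_tendsto_zero[OF assms(1)]
        bounded_linear.tendsto[OF matrix_vector_mul_bounded_linear])
  then have "((\<lambda>T. c * integral {0..} h + \<phi> T) \<longlongrightarrow> c * integral {0..} h + 0) at_top"
    by (intro tendsto_add tendsto_const) simp
  moreover have "\<forall>\<^sub>F T in at_top. \<phi> 0 \<le> c * integral {0..} h + \<phi> T"
    using eventually_ge_at_top[of 0] by (rule eventually_mono) (rule bound)
  ultimately have "\<phi> 0 \<le> c * integral {0..} h + 0"
    by (rule tendsto_lowerbound[OF _ _ trivial_limit_at_top_linorder])
  then show ?thesis unfolding \<phi>_def h_def by simp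
qed

lemma integrable_mexp_gramian:
  assumes "hurwitz (A::real^'n::finite^'n)"
  shows "(\<lambda>t. mexp (t *\<^sub>R A) ** mexp (t *\<^sub>R transpose A)) integrable_on {0..}"
proof -
  obtain \<epsilon> C where "0 < \<epsilon>"
    and decay: "\<forall>x t. 0 \<le> t \<longrightarrow> norm (mexp (t *\<^sub>R A) *v x) ^ 2 \<le> C * norm x ^ 2 * exp (- \<epsilon> * t)"
    using hurwitz_exp_decay[OF assms] by blast
  show ?thesis
  proof (rule integrable_on_exp_bound[OF _ \<open>0 < \<epsilon>\<close>])
    show "continuous_on {0..} (\<lambda>t. mexp (t *\<^sub>R A) ** mexp (t *\<^sub>R transpose A))"
      by (intro bounded_bilinear.continuous_on[OF bounded_bilinear_matrix_mult] continuous_on_mexp)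
    fix t :: real assume "0 \<le> t"
    let ?E = "mexp (t *\<^sub>R A)"
    have "norm (?E ** mexp (t *\<^sub>R transpose A)) \<le> CARD('n) * CARD('n) * trace (?E ** transpose ?E)"
      using norm_mult_transpose_le[of ?E] by (simp add: transpose_scalar[symmetric] mexp_transpose)
    also have "trace (?E ** transpose ?E) \<le> (\<Sum>k\<in>(UNIV::'n set). C * exp (- \<epsilon> * t))"
      unfolding trace_mult_transpose
      using decay[rule_format, OF \<open>0 \<le> t\<close>, of "axis _ 1"] by (intro sum_mono) simp
    finally show "norm (?E ** mexp (t *\<^sub>R transpose A)) \<le> CARD('n) * CARD('n) * (CARD('n) * C) * exp (- \<epsilon> * t)"
      by (simp add: mult.assoc)
  qed
qed

text \<open>Summing the bound on \<open>x\<^sup>T \<Delta> x\<close> over the standard basis turns the integrand into the trace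
  of the Gramian \<open>e\<^sup>t\<^sup>A e\<^sup>t\<^sup>A\<^sup>T\<close>.\<close>

lemma trace_le_of_lyapunov_inequality:
  fixes A \<Delta> :: "real^'n::finite^'n"
  assumes "hurwitz A" and "0 \<le> c"
    and lyapunov: "\<And>y. - (y \<bullet> ((transpose A ** \<Delta> + \<Delta> ** A) *v y)) \<le> c * (y \<bullet> y)"
  shows "trace \<Delta> \<le> c * trace (integral {0..} (\<lambda>t. mexp (t *\<^sub>R A) ** mexp (t *\<^sub>R transpose A)))"
proof -
  define h where "h k t = norm (mexp (t *\<^sub>R A) *v axis k 1) ^ 2" for k t
  define G where "G t = mexp (t *\<^sub>R A) ** mexp (t *\<^sub>R transpose A)" for t
  have trace_G: "trace (G t) = (\<Sum>k\<in>UNIV. h k t)" for t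
    by (simp add: G_def h_def transpose_scalar[symmetric] mexp_transpose trace_mult_transpose)
  have h_int: "h k integrable_on {0..}" for k
    unfolding h_def by (rule integrable_trajectory_norm_square[OF assms(1)])
  have "trace \<Delta> = (\<Sum>k\<in>UNIV. axis k 1 \<bullet> (\<Delta> *v axis k 1))" by (rule trace_eq_sum_inner_axis)
  also have "\<dots> \<le> (\<Sum>k\<in>UNIV. c * integral {0..} (h k))"
    unfolding h_def by (intro sum_mono quadratic_form_le_of_lyapunov_inequality[OF assms])
  also have "\<dots> = c * integral {0..} (\<lambda>t. trace (G t))"
    by (simp add: trace_G integral_sum h_int sum_distrib_left)
  also have "\<dots> = c * trace (integral {0..} G)"
    using integral_linear[OF integrable_mexp_gramian[OF assms(1)] bounded_linear_trace]
    unfolding G_def by (simp add: o_def)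
  finally show ?thesis unfolding G_def .
qed

section \<open>The comparison of the two value matrices\<close>

lemma riccati_comparison_identity:
  fixes A P P' Q :: "real^'n::finite^'n" and D :: "real^'q::finite^'n" and L :: "real^'n^'q"
  assumes sg: "s * g = 1" and sym: "transpose P = P" "transpose P' = P'"
    and riccati: "transpose A ** P + P ** A + Q + s *\<^sub>R (P ** D ** transpose D ** P) = 0"
    and lyapunov: "transpose (A + D ** L) ** P' + P' ** (A + D ** L) + Q - g *\<^sub>R (transpose L ** L) = 0"
  shows "transpose (A + D ** (s *\<^sub>R (transpose D ** P))) ** (P - P') + (P - P') ** (A + D ** (s *\<^sub>R (transpose D ** P)))
         + g *\<^sub>R (transpose (s *\<^sub>R (transpose D ** P') - L) ** (s *\<^sub>R (transpose D ** P') - L))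
       = s *\<^sub>R ((P - P') ** D ** transpose D ** (P - P'))"
proof -
  have "s \<noteq> 0" using sg by auto
  have "g = inverse s" using inverse_unique[OF sg] by simp
  note simps = transpose_add transpose_diff matrix_transpose_mul transpose_scalar sym
    matrix_add_ldistrib matrix_add_rdistrib matrix_diff_ldistrib matrix_diff_rdistrib
    matrix_scalar_ac scalar_matrix_assoc[symmetric] matrix_mul_assoc scaleR_diff_right scaleR_add_right
  have "transpose (A + D ** (s *\<^sub>R (transpose D ** P))) ** (P - P') + (P - P') ** (A + D ** (s *\<^sub>R (transpose D ** P)))
         + g *\<^sub>R (transpose (s *\<^sub>R (transpose D ** P') - L) ** (s *\<^sub>R (transpose D ** P') - L))
         - s *\<^sub>R ((P - P') ** D ** transpose D ** (P - P'))
       = (transpose A ** P + P ** A + Q + s *\<^sub>R (P ** D ** transpose D ** P))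
         - (transpose (A + D ** L) ** P' + P' ** (A + D ** L) + Q - g *\<^sub>R (transpose L ** L))"
    using \<open>s \<noteq> 0\<close> by (simp add: simps \<open>g = inverse s\<close> algebra_simps)
  then show ?thesis using riccati lyapunov by simp
qed

text \<open>Since \<open>\<Delta> D D\<^sup>T \<Delta>\<close> is positive semidefinite, the identity bounds the Lyapunov operator of
  \<open>A\<^sub>c\<^sub>l\<close> at \<open>\<Delta> = P - P'\<close> from below by \<open>-\<Psi>\<close>.\<close>

lemma riccati_comparison_inequality:
  fixes A P P' Q :: "real^'n::finite^'n" and D :: "real^'q::finite^'n" and L :: "real^'n^'q"
  assumes "0 < s" and "s * g = 1" and sym: "transpose P = P" "transpose P' = P'"
    and riccati: "transpose A ** P + P ** A + Q + s *\<^sub>R (P ** D ** transpose D ** P) = 0"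
    and lyapunov: "transpose (A + D ** L) ** P' + P' ** (A + D ** L) + Q - g *\<^sub>R (transpose L ** L) = 0"
  defines "Acl \<equiv> A + D ** (s *\<^sub>R (transpose D ** P))"
    and "\<Psi> \<equiv> g *\<^sub>R (transpose (s *\<^sub>R (transpose D ** P') - L) ** (s *\<^sub>R (transpose D ** P') - L))"
  shows "- (y \<bullet> ((transpose Acl ** (P - P') + (P - P') ** Acl) *v y)) \<le> spec_norm \<Psi> * (y \<bullet> y)"
proof -
  have "(P - P') ** D ** transpose D ** (P - P') = transpose (transpose D ** (P - P')) ** (transpose D ** (P - P'))"
    using sym by (simp add: transpose_diff matrix_transpose_mul matrix_mul_assoc)
  then have "0 \<le> y \<bullet> (((P - P') ** D ** transpose D ** (P - P')) *v y)"
    by (simp add: inner_transpose_mult_self)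
  moreover have "transpose Acl ** (P - P') + (P - P') ** Acl = s *\<^sub>R ((P - P') ** D ** transpose D ** (P - P')) - \<Psi>"
    using riccati_comparison_identity[OF assms(2) sym riccati lyapunov]
    unfolding Acl_def \<Psi>_def by (simp add: eq_diff_eq)
  ultimately have "- (y \<bullet> ((transpose Acl ** (P - P') + (P - P') ** Acl) *v y)) \<le> y \<bullet> (\<Psi> *v y)"
    using \<open>0 < s\<close>
    by (simp add: matrix_vector_mult_diff_rdistrib inner_diff_right scaleR_matrix_vector_assoc[symmetric])
  also have "\<dots> \<le> spec_norm \<Psi> * (y \<bullet> y)" unfolding spec_norm_def by (rule inner_le_onorm)
  finally show ?thesis .
qed

theorem lemma7:
  fixes A :: "real^'n^'n" and B :: "real^'m^'n" and C :: "real^'n^'p" and D :: "real^'q^'n"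
    and E :: "real^'m^'p" and \<gamma> :: real and K :: "real^'n^'m" and L :: "real^'n^'q"
    and PK PKL :: "real^'n^'n"
  defines "AK \<equiv> A - B ** K"
    and "QK \<equiv> transpose C ** C + transpose K ** (transpose E ** E) ** K"
  assumes gamma_pos: "\<gamma> > 0"
    and Q_pd: "pos_def (transpose C ** C)"
    and EC: "transpose E ** C = 0"
    and R_pd: "pos_def (transpose E ** E)"
    and K_in: "K \<in> Kset A B C D E \<gamma>"
    and PK_pd: "pos_def PK"
    and PK_are: "transpose AK ** PK + PK ** AK + QK + (\<gamma> powi (-2)) *\<^sub>R (PK ** D ** transpose D ** PK) = 0"
    and PK_stab: "hurwitz (AK + (\<gamma> powi (-2)) *\<^sub>R (D ** transpose D ** PK))"
    and L_stab: "hurwitz (AK + D ** L)"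
    and PKL_eq: "transpose (AK + D ** L) ** PKL + PKL ** (AK + D ** L) + QK - (\<gamma>\<^sup>2) *\<^sub>R (transpose L ** L) = 0"
  shows "let L' = (\<gamma> powi (-2)) *\<^sub>R (transpose D ** PKL);
             \<Psi> = (\<gamma>\<^sup>2) *\<^sub>R (transpose (L' - L) ** (L' - L));
             Lstar = (\<gamma> powi (-2)) *\<^sub>R (transpose D ** PK);
             Acl = AK + D ** Lstar;
             c = trace (integral {0..} (\<lambda>t::real. mexp (t *\<^sub>R Acl) ** mexp (t *\<^sub>R transpose Acl)))
         in trace (PK - PKL) \<le> spec_norm \<Psi> * c"
proof -
  define s where "s = \<gamma> powi (-2)"
  define Acl where "Acl = AK + D ** (s *\<^sub>R (transpose D ** PK))"
  define \<Psi> where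
    "\<Psi> = \<gamma>\<^sup>2 *\<^sub>R (transpose (s *\<^sub>R (transpose D ** PKL) - L) ** (s *\<^sub>R (transpose D ** PKL) - L))"
  have "0 < s" and "s * \<gamma>\<^sup>2 = 1" using gamma_pos by (simp_all add: s_def power_int_minus)
  have PK_sym: "transpose PK = PK" using PK_pd unfolding pos_def_def by blast
  have QK_sym: "transpose QK = QK"
    unfolding QK_def by (simp add: transpose_add matrix_transpose_mul matrix_mul_assoc)
  have PKL_sym: "transpose PKL = PKL"
    by (rule lyapunov_solution_symmetric[OF L_stab, of "QK - \<gamma>\<^sup>2 *\<^sub>R (transpose L ** L)"])
      (use PKL_eq QK_sym in \<open>simp_all add: transpose_diff transpose_scalar matrix_transpose_mul add_diff_eq\<close>)
  have "hurwitz Acl"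
    using PK_stab by (simp add: Acl_def s_def matrix_scalar_ac matrix_mul_assoc scalar_matrix_assoc)
  moreover have "0 \<le> spec_norm \<Psi>" unfolding spec_norm_def by (rule onorm_matrix_nonneg)
  moreover note riccati_comparison_inequality[OF \<open>0 < s\<close> \<open>s * \<gamma>\<^sup>2 = 1\<close> PK_sym PKL_sym
      PK_are[folded s_def] PKL_eq]
  ultimately have "trace (PK - PKL)
      \<le> spec_norm \<Psi> * trace (integral {0..} (\<lambda>t. mexp (t *\<^sub>R Acl) ** mexp (t *\<^sub>R transpose Acl)))"
    unfolding Acl_def \<Psi>_def by (rule trace_le_of_lyapunov_inequality)
  then show ?thesis by (simp add: Let_def Acl_def \<Psi>_def s_def)
qed

end
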